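(* Assume Assumption A. Let $\mathscr C$ be a communicating (equivalence) class of the limiting chain $X_R$. Then for all $\eta\ne\xi\in\mathscr C$ there exists $m(\eta,\xi)\in(0,\infty)$ with $\lim_{N\to\infty}\mu_N(\eta)/\mu_N(\xi)=m(\eta,\xi)$.
   Context: Setting: $E$ is a fixed finite set; for each $N\ge1$, $(\eta^N_t)$ is a continuous-time irreducible Markov chain on $E$ with jump rates $R_N(\eta,\xi)$ and unique invariant probability measure $\mu_N$. Ordered families: a finite family of sequences of positive reals $(a^r_N)_{N\ge1}$, $r\in\mathfrak R$, is ordered if for all $r\neq s$ the sequence $\arctan(a^r_N/a^s_N)$ converges as $N\to\infty$. Assumption A: (i) for each $\eta\neq\xi$, either $R_N(\eta,\xi)=0$ for all $N$ or $R_N(\eta,\xi)>0$ for all $N$; let $\mathbb B=\{(\eta,\xi):\eta\ne\xi,R_N(\eta,\xi)>0\}$. (ii) For every $m\ge1$ the family $\prod_{(\eta,\xi)\in\mathbb B}R_N(\eta,\xi)^{k(\eta,\xi)}$, indexed by $k:\mathbb B\to\mathbb Z_+$ with $\sum k=m$, is ordered. Limiting chain: $\alpha_N^{-1}=\sum_\eta\sum_{\xi\ne\eta}R_N(\eta,\xi)$; under Assumption A, $R(\eta,\xi)=\lim_N\alpha_NR_N(\eta,\xi)\in[0,1]$ exists; $X_R$ is the Markov chain on $E$ with rates $R(\eta,\xi)$ (possibly reducible). Two states are in the same communicating class if each can be reached from the other along a path of positive $R$-rates. *)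

theory Defs
  imports "HOL-Analysis.Analysis"
begin

text \<open>A chain is given by jump rates R :: nat \<Rightarrow> 'a \<Rightarrow> 'a \<Rightarrow> real on a finite
state type 'a; only the values R N x y with N \<ge> 1 and x \<noteq> y are meaningful.\<close>

definition rate_graph :: "('a \<Rightarrow> 'a \<Rightarrow> real) \<Rightarrow> ('a \<times> 'a) set" where
  "rate_graph r = {(x, y). x \<noteq> y \<and> r x y > 0}"

definition irreducible_rates :: "('a \<Rightarrow> 'a \<Rightarrow> real) \<Rightarrow> bool" where
  "irreducible_rates r \<longleftrightarrow> (\<forall>x y. (x, y) \<in> (rate_graph r)\<^sup>*)"

definition invariant_prob :: "('a::finite \<Rightarrow> 'a \<Rightarrow> real) \<Rightarrow> ('a \<Rightarrow> real) \<Rightarrow> bool" where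
  "invariant_prob r mu \<longleftrightarrow> (\<forall>x. mu x \<ge> 0) \<and> (\<Sum>x\<in>UNIV. mu x) = 1 \<and>
     (\<forall>x. (\<Sum>y\<in>UNIV - {x}. mu y * r y x) = mu x * (\<Sum>y\<in>UNIV - {x}. r x y))"

definition ordered_family :: "'i set \<Rightarrow> ('i \<Rightarrow> nat \<Rightarrow> real) \<Rightarrow> bool" where
  "ordered_family I a \<longleftrightarrow> finite I \<and> (\<forall>r\<in>I. \<forall>N\<ge>1. a r N > 0) \<and>
     (\<forall>r\<in>I. \<forall>s\<in>I. r \<noteq> s \<longrightarrow> convergent (\<lambda>N. arctan (a r N / a s N)))"

definition bonds :: "(nat \<Rightarrow> 'a \<Rightarrow> 'a \<Rightarrow> real) \<Rightarrow> ('a \<times> 'a) set" where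
  "bonds R = {(x, y). x \<noteq> y \<and> R 1 x y > 0}"

definition assumption_A :: "(nat \<Rightarrow> 'a::finite \<Rightarrow> 'a \<Rightarrow> real) \<Rightarrow> bool" where
  "assumption_A R \<longleftrightarrow>
     (\<forall>x y. x \<noteq> y \<longrightarrow> ((\<forall>N\<ge>1. R N x y = 0) \<or> (\<forall>N\<ge>1. R N x y > 0))) \<and>
     (\<forall>m::nat\<ge>1. ordered_family
        {k :: 'a \<times> 'a \<Rightarrow> nat. (\<forall>p. p \<notin> bonds R \<longrightarrow> k p = 0) \<and> (\<Sum>p\<in>bonds R. k p) = m}
        (\<lambda>k N. \<Prod>p\<in>bonds R. R N (fst p) (snd p) ^ k p))"

definition alpha :: "(nat \<Rightarrow> 'a::finite \<Rightarrow> 'a \<Rightarrow> real) \<Rightarrow> nat \<Rightarrow> real" where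
  "alpha R N = 1 / (\<Sum>x\<in>UNIV. \<Sum>y\<in>UNIV - {x}. R N x y)"

definition limit_rates :: "(nat \<Rightarrow> 'a::finite \<Rightarrow> 'a \<Rightarrow> real) \<Rightarrow> 'a \<Rightarrow> 'a \<Rightarrow> real" where
  "limit_rates R x y = lim (\<lambda>N. alpha R N * R N x y)"

definition communicate :: "('a \<Rightarrow> 'a \<Rightarrow> real) \<Rightarrow> 'a \<Rightarrow> 'a \<Rightarrow> bool" where
  "communicate r x y \<longleftrightarrow> (x, y) \<in> (rate_graph r)\<^sup>* \<and> (y, x) \<in> (rate_graph r)\<^sup>*"

definition communicating_class :: "('a \<Rightarrow> 'a \<Rightarrow> real) \<Rightarrow> 'a set \<Rightarrow> bool" where
  "communicating_class r C \<longleftrightarrow> (\<exists>x. C = {y. communicate r x y})"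

end

theory Submission
  imports Defs
begin

text \<open>By the Markov chain tree theorem, the invariant measure of each chain is proportional to
  the tree weights W_N(x): the sum, over spanning trees directed towards x, of the products of
  their rates. Only trees made of bonds contribute, so W_N(x) is a sum of rate_monomials of degree
  |E| - 1 in the rates, and by Assumption A these rate_monomials form an ordered family. Normalising
  by a dominant rate_monomial, a ratio of two such sums converges as soon as the denominator
  eventually dominates a fixed multiple of the numerator. Along an edge y \<rightarrow> z of positive
  limiting rate, the balance equation at z gives mu_N(z) \<ge> c mu_N(y) for large N; inside a
  communicating class this holds in both directions, so the ratio has a positive limit.\<close>

section \<open>Spanning trees and the Markov chain tree theorem\<close>

text \<open>A spanning tree directed towards x is encoded by its parent map; the value at the root
  is fixed to x and is not an edge.\<close>
definition spanning_trees :: "'a \<Rightarrow> ('a \<Rightarrow> 'a) set" where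
  "spanning_trees x = {f. f x = x \<and> (\<forall>a. \<exists>n. (f^^n) a = x)}"

definition tree_weight :: "('a::finite \<Rightarrow> 'a \<Rightarrow> real) \<Rightarrow> 'a \<Rightarrow> real" where
  "tree_weight r x = (\<Sum>f\<in>spanning_trees x. \<Prod>a\<in>UNIV - {x}. r a (f a))"

definition unicyclic_through :: "'a \<Rightarrow> ('a \<Rightarrow> 'a) set" where
  "unicyclic_through x = {g. g x \<noteq> x \<and> (\<forall>a. \<exists>n. (g^^n) a = x)}"

lemma funpow_fun_upd_eq:
  assumes "\<forall>j<n. (f^^j) a \<noteq> z"
  shows "((f(z := v))^^n) a = (f^^n) a"
  using assms by (induction n) auto

lemma funpow_least_hit:
  assumes "(f^^n) a = x"
  obtains m where "(f^^m) a = x" "\<forall>j<m. (f^^j) a \<noteq> x"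
  using assms exists_least_iff[of "\<lambda>m. (f^^m) a = x"] by blast

lemma reaches_fun_upd:
  assumes "(f^^n) a = z"
  shows "\<exists>m. ((f(z := v))^^m) a = z"
proof -
  obtain m where "(f^^m) a = z" "\<forall>j<m. (f^^j) a \<noteq> z"
    using funpow_least_hit assms by metis
  then show ?thesis using funpow_fun_upd_eq by metis
qed

lemma funpow_least_hit_avoids_pred:
  assumes "f y = x" "(f^^n) x = z" "\<forall>j<n. (f^^j) x \<noteq> z" "j < n"
  shows "(f^^j) x \<noteq> y"
proof
  assume "(f^^j) x = y"
  then have "(f^^Suc j) x = x" using assms(1) by simp
  then have "(f^^(n - Suc j)) x = (f^^n) x"
    using assms(4) by (metis Suc_leI comp_apply funpow_add le_add_diff_inverse2)
  moreover have "n - Suc j < n" using assms(4) by simp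
  ultimately show False using assms(2,3) by metis
qed

lemma spanning_tree_no_fixpoint:
  assumes "f \<in> spanning_trees y" "x \<noteq> y"
  shows "f x \<noteq> x"
proof
  assume fixed: "f x = x"
  obtain n where "(f^^n) x = y" using assms(1) unfolding spanning_trees_def by blast
  moreover have "(f^^n) x = x" using fixed by (induction n) auto
  ultimately show False using assms(2) by simp
qed

lemma reaches_fun_upd_root:
  assumes "\<forall>a. \<exists>n. (f^^n) a = x"
  shows "\<exists>n. ((f(x := v))^^n) a = x"
  using assms reaches_fun_upd by metis

lemma bij_betw_spanning_trees_out:
  "bij_betw (\<lambda>(f, y). f(x := y)) (spanning_trees x \<times> (UNIV - {x})) (unicyclic_through x)"
proof (rule bij_betw_byWitness[where f' = "\<lambda>g. (g(x := x), g x)"])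
  show "\<forall>p\<in>spanning_trees x \<times> (UNIV - {x}). (\<lambda>g. (g(x := x), g x)) ((\<lambda>(f, y). f(x := y)) p) = p"
    by (auto simp: spanning_trees_def)
  show "\<forall>g\<in>unicyclic_through x. (\<lambda>(f, y). f(x := y)) ((\<lambda>g. (g(x := x), g x)) g) = g"
    by simp
  show "(\<lambda>(f, y). f(x := y)) ` (spanning_trees x \<times> (UNIV - {x})) \<subseteq> unicyclic_through x"
    unfolding spanning_trees_def unicyclic_through_def by (auto intro: reaches_fun_upd_root)
  show "(\<lambda>g. (g(x := x), g x)) ` unicyclic_through x \<subseteq> spanning_trees x \<times> (UNIV - {x})"
    unfolding spanning_trees_def unicyclic_through_def by (auto intro: reaches_fun_upd_root)
qed

lemma spanning_trees_cut_point_unique: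
  assumes f1: "f1 \<in> spanning_trees y1" and f2: "f2 \<in> spanning_trees y2"
    and g: "f1(y1 := x) = f2(y2 := x)"
  shows "y1 = y2"
proof (rule ccontr)
  assume ne: "y1 \<noteq> y2"
  define g where "g = f1(y1 := x)"
  have g2: "g = f2(y2 := x)" using g unfolding g_def .
  have "f1 y2 = x" "f2 y1 = x" using ne g2 unfolding g_def by (metis fun_upd_apply)+
  obtain m1 where "(f1^^m1) x = y1" using f1 unfolding spanning_trees_def by blast
  then obtain n1 where n1: "(f1^^n1) x = y1" "\<forall>j<n1. (f1^^j) x \<noteq> y1"
    by (rule funpow_least_hit)
  obtain m2 where "(f2^^m2) x = y2" using f2 unfolding spanning_trees_def by blast
  then obtain n2 where n2: "(f2^^n2) x = y2" "\<forall>j<n2. (f2^^j) x \<noteq> y2"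
    by (rule funpow_least_hit)
  have avoid1: "\<forall>j<n1. (f1^^j) x \<noteq> y2"
    using funpow_least_hit_avoids_pred[OF \<open>f1 y2 = x\<close> n1] by blast
  have avoid2: "\<forall>j<n2. (f2^^j) x \<noteq> y1"
    using funpow_least_hit_avoids_pred[OF \<open>f2 y1 = x\<close> n2] by blast
  have g_f1: "(g^^j) x = (f1^^j) x" if "j \<le> n1" for j
    unfolding g_def using that n1(2) by (intro funpow_fun_upd_eq) auto
  have g_f2: "(g^^j) x = (f2^^j) x" if "j \<le> n2" for j
    unfolding g2 using that n2(2) by (intro funpow_fun_upd_eq) auto
  consider "n1 < n2" | "n1 = n2" | "n2 < n1" by linarith
  then show False
  proof cases
    case 1
    then have "(f2^^n1) x = y1" using g_f1[of n1] g_f2[of n1] n1(1) by simp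
    then show False using avoid2 1 by blast
  next
    case 2
    then show False using g_f1[of n1] g_f2[of n1] n1(1) n2(1) ne by simp
  next
    case 3
    then have "(f1^^n2) x = y2" using g_f1[of n2] g_f2[of n2] n2(1) by simp
    then show False using avoid1 3 by blast
  qed
qed

lemma bij_betw_spanning_trees_in:
  "bij_betw (\<lambda>(y, f). f(y := x)) (SIGMA y:UNIV - {x}. spanning_trees y) (unicyclic_through x)"
  unfolding bij_betw_def
proof (intro conjI subset_antisym)
  show "inj_on (\<lambda>(y, f). f(y := x)) (SIGMA y:UNIV - {x}. spanning_trees y)"
  proof (rule inj_onI)
    fix p q
    assume "p \<in> (SIGMA y:UNIV - {x}. spanning_trees y)" "q \<in> (SIGMA y:UNIV - {x}. spanning_trees y)"
      and "(\<lambda>(y, f). f(y := x)) p = (\<lambda>(y, f). f(y := x)) q"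
    moreover obtain y1 f1 y2 f2 where pq: "p = (y1, f1)" "q = (y2, f2)" by fastforce
    ultimately have f1: "f1 \<in> spanning_trees y1" and f2: "f2 \<in> spanning_trees y2"
      and g: "f1(y1 := x) = f2(y2 := x)" by auto
    have "y1 = y2" using spanning_trees_cut_point_unique[OF f1 f2 g] .
    moreover have "f1 = f2"
    proof
      fix a
      show "f1 a = f2 a"
        using f1 f2 \<open>y1 = y2\<close> fun_cong[OF g, of a] unfolding spanning_trees_def
        by (cases "a = y1") auto
    qed
    ultimately show "p = q" using pq by simp
  qed
  show "(\<lambda>(y, f). f(y := x)) ` (SIGMA y:UNIV - {x}. spanning_trees y) \<subseteq> unicyclic_through x"
  proof (rule image_subsetI)
    fix p assume "p \<in> (SIGMA y:UNIV - {x}. spanning_trees y)"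
    then obtain y f where p: "p = (y, f)" and y: "y \<noteq> x" and f: "f \<in> spanning_trees y" by auto
    have "\<exists>n. ((f(y := x))^^n) a = x" for a
    proof -
      obtain n where "(f^^n) a = y" using f unfolding spanning_trees_def by blast
      then obtain m where "((f(y := x))^^m) a = y" using reaches_fun_upd by metis
      then have "((f(y := x))^^Suc m) a = x" by simp
      then show ?thesis by blast
    qed
    then show "(\<lambda>(y, f). f(y := x)) p \<in> unicyclic_through x"
      using spanning_tree_no_fixpoint[OF f y[symmetric]] y p unfolding unicyclic_through_def by simp
  qed
  show "unicyclic_through x \<subseteq> (\<lambda>(y, f). f(y := x)) ` (SIGMA y:UNIV - {x}. spanning_trees y)"
  proof
    fix g assume g: "g \<in> unicyclic_through x"
    obtain n where n: "(g^^n) (g x) = x" using g unfolding unicyclic_through_def by blast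
    define y where "y = (g^^n) x"
    have gy: "g y = x" using n unfolding y_def by (simp add: funpow_swap1)
    have "y \<noteq> x" using gy g unfolding unicyclic_through_def by auto
    have "\<exists>m. ((g(y := y))^^m) a = y" for a
    proof -
      obtain k where "(g^^k) a = x" using g unfolding unicyclic_through_def by blast
      then have "(g^^(n + k)) a = y" unfolding y_def funpow_add by simp
      then show ?thesis by (rule reaches_fun_upd)
    qed
    then have "g(y := y) \<in> spanning_trees y" unfolding spanning_trees_def by simp
    then have "(y, g(y := y)) \<in> (SIGMA y:UNIV - {x}. spanning_trees y)" using \<open>y \<noteq> x\<close> by simp
    moreover have "g = (\<lambda>(y, f). f(y := x)) (y, g(y := y))" using gy by (simp add: fun_upd_idem)
    ultimately show "g \<in> (\<lambda>(y, f). f(y := x)) ` (SIGMA y:UNIV - {x}. spanning_trees y)"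
      by (rule rev_image_eqI)
  qed
qed

lemma prod_fun_upd_weight:
  fixes r :: "'a::finite \<Rightarrow> 'a \<Rightarrow> real"
  shows "(\<Prod>a\<in>UNIV. r a ((f(z := v)) a)) = r z v * (\<Prod>a\<in>UNIV - {z}. r a (f a))"
proof -
  have "(\<Prod>a\<in>UNIV. r a ((f(z := v)) a)) = r z v * (\<Prod>a\<in>UNIV - {z}. r a ((f(z := v)) a))"
    by (subst prod.remove[of UNIV z]) auto
  also have "(\<Prod>a\<in>UNIV - {z}. r a ((f(z := v)) a)) = (\<Prod>a\<in>UNIV - {z}. r a (f a))"
    by (rule prod.cong) auto
  finally show ?thesis .
qed

text \<open>Markov chain tree theorem: both sides equal the total weight of the functional graphs in
  which every point flows into a cycle through x. Such a graph is a tree rooted at x plus the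
  edge leaving x, or a tree rooted at the predecessor of x on the cycle plus the edge into x.\<close>
lemma tree_weight_balanced:
  fixes r :: "'a::finite \<Rightarrow> 'a \<Rightarrow> real"
  shows "(\<Sum>y\<in>UNIV - {x}. tree_weight r y * r y x) = tree_weight r x * (\<Sum>y\<in>UNIV - {x}. r x y)"
proof -
  define W where "W g = (\<Prod>a\<in>UNIV. r a (g a))" for g
  have "tree_weight r x * (\<Sum>y\<in>UNIV - {x}. r x y)
      = (\<Sum>(f, y)\<in>spanning_trees x \<times> (UNIV - {x}). r x y * (\<Prod>a\<in>UNIV - {x}. r a (f a)))"
    unfolding tree_weight_def sum_product sum.cartesian_product by (simp add: mult.commute)
  also have "\<dots> = (\<Sum>(f, y)\<in>spanning_trees x \<times> (UNIV - {x}). W (f(x := y)))"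
    unfolding W_def prod_fun_upd_weight ..
  also have "\<dots> = (\<Sum>g\<in>unicyclic_through x. W g)"
    using sum.reindex_bij_betw[OF bij_betw_spanning_trees_out, of W] by (simp add: case_prod_unfold)
  also have "\<dots> = (\<Sum>(y, f)\<in>(SIGMA y:UNIV - {x}. spanning_trees y). W (f(y := x)))"
    using sum.reindex_bij_betw[OF bij_betw_spanning_trees_in, of W] by (simp add: case_prod_unfold)
  also have "\<dots> = (\<Sum>(y, f)\<in>(SIGMA y:UNIV - {x}. spanning_trees y). r y x * (\<Prod>a\<in>UNIV - {y}. r a (f a)))"
    unfolding W_def prod_fun_upd_weight ..
  also have "\<dots> = (\<Sum>y\<in>UNIV - {x}. tree_weight r y * r y x)"
    unfolding tree_weight_def by (subst sum.Sigma[symmetric]) (auto simp: sum_distrib_left mult.commute)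
  finally show ?thesis ..
qed

lemma spanning_tree_exists:
  assumes reach: "\<And>a. (a, x) \<in> G\<^sup>*"
  shows "\<exists>f\<in>spanning_trees x. \<forall>a. a \<noteq> x \<longrightarrow> (a, f a) \<in> G"
proof -
  define d where "d a = (LEAST n. (a, x) \<in> G ^^ n)" for a
  have d: "(a, x) \<in> G ^^ d a" for a
    unfolding d_def using reach[of a] by (auto simp: rtrancl_power intro: LeastI_ex)
  define f where "f a = (if a = x then x else SOME b. (a, b) \<in> G \<and> (b, x) \<in> G ^^ (d a - 1))" for a
  have step: "(a, f a) \<in> G \<and> (f a, x) \<in> G ^^ (d a - 1)" if ax: "a \<noteq> x" for a
  proof -
    obtain k where k: "d a = Suc k"
      using d[of a] ax by (cases "d a") auto
    then have "\<exists>b. (a, b) \<in> G \<and> (b, x) \<in> G ^^ (d a - 1)"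
      using d[of a] relpow_Suc_D2 by simp
    then show ?thesis unfolding f_def using ax by (simp del: One_nat_def) (rule someI_ex)
  qed
  have "\<exists>n. (f^^n) a = x" for a
  proof (induction "d a" arbitrary: a rule: less_induct)
    case less
    show ?case
    proof (cases "a = x")
      case False
      have "d (f a) \<le> d a - 1" using step[OF False] unfolding d_def[of "f a"] by (blast intro: Least_le)
      moreover have "d a \<noteq> 0" using d[of a] False by (metis relpow_0_E)
      ultimately obtain n where "(f^^n) (f a) = x" using less by fastforce
      then have "(f^^Suc n) a = x" by (simp add: funpow_swap1)
      then show ?thesis ..
    qed (metis funpow_0)
  qed
  then have "f \<in> spanning_trees x" unfolding spanning_trees_def f_def by simp
  with step show ?thesis by blast
qed

section \<open>Balanced vectors and invariant measures\<close>

definition balanced :: "('a::finite \<Rightarrow> 'a \<Rightarrow> real) \<Rightarrow> ('a \<Rightarrow> real) \<Rightarrow> bool" where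
  "balanced r v \<longleftrightarrow> (\<forall>x. (\<Sum>y\<in>UNIV - {x}. v y * r y x) = v x * (\<Sum>y\<in>UNIV - {x}. r x y))"

lemma balanced_tree_weight: "balanced r (tree_weight r)"
  unfolding balanced_def using tree_weight_balanced by blast

lemma balanced_diff:
  assumes "balanced r v" "balanced r w"
  shows "balanced r (\<lambda>x. v x - c * w x)"
  unfolding balanced_def
proof
  fix x
  have "(\<Sum>y\<in>UNIV - {x}. (v y - c * w y) * r y x)
      = (\<Sum>y\<in>UNIV - {x}. v y * r y x) - c * (\<Sum>y\<in>UNIV - {x}. w y * r y x)"
    by (simp add: left_diff_distrib sum_subtractf sum_distrib_left mult.assoc)
  also have "\<dots> = (v x - c * w x) * (\<Sum>y\<in>UNIV - {x}. r x y)"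
    using assms unfolding balanced_def by (simp add: left_diff_distrib)
  finally show "(\<Sum>y\<in>UNIV - {x}. (v y - c * w y) * r y x) = (v x - c * w x) * (\<Sum>y\<in>UNIV - {x}. r x y)" .
qed

lemma balanced_zero_propagates:
  assumes nonneg: "\<And>x y. x \<noteq> y \<Longrightarrow> r x y \<ge> 0" and v_nonneg: "\<And>x. v x \<ge> 0"
    and bal: "balanced r v" and irr: "irreducible_rates r" and zero: "v z = 0"
  shows "v y = 0"
proof -
  have "(y, z) \<in> (rate_graph r)\<^sup>*" using irr unfolding irreducible_rates_def by blast
  then show ?thesis
  proof (induction rule: converse_rtrancl_induct)
    case (step y y')
    then have edge: "y \<noteq> y'" "r y y' > 0" unfolding rate_graph_def by auto
    have "(\<Sum>u\<in>UNIV - {y'}. v u * r u y') = 0" using bal step.IH unfolding balanced_def by simp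
    moreover have "\<forall>u\<in>UNIV - {y'}. v u * r u y' \<ge> 0" using nonneg v_nonneg by simp
    ultimately have "\<forall>u\<in>UNIV - {y'}. v u * r u y' = 0"
      using sum_nonneg_eq_0_iff[of "UNIV - {y'}" "\<lambda>u. v u * r u y'"] by simp
    then have "v y * r y y' = 0" using edge(1) by blast
    then show ?case using edge(2) by simp
  qed (rule zero)
qed

lemma invariant_prob_pos:
  assumes "\<And>x y. x \<noteq> y \<Longrightarrow> r x y \<ge> 0" "irreducible_rates r" "invariant_prob r mu"
  shows "mu x > 0"
proof (rule ccontr)
  have "\<And>x. mu x \<ge> 0" and "sum mu UNIV = 1" and "balanced r mu"
    using assms(3) unfolding invariant_prob_def balanced_def by auto
  moreover assume "\<not> mu x > 0"
  ultimately have "mu y = 0" for y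
    using balanced_zero_propagates[of r mu x y] assms(1,2) by (simp add: not_less order.antisym)
  with \<open>sum mu UNIV = 1\<close> show False by simp
qed

text \<open>Subtracting from w the largest multiple of mu below it leaves a nonnegative balanced
  vector with a zero, which vanishes by irreducibility.\<close>
lemma balanced_proportional_invariant_prob:
  assumes nonneg: "\<And>x y. x \<noteq> y \<Longrightarrow> r x y \<ge> 0" and irr: "irreducible_rates r"
    and inv: "invariant_prob r mu" and w_nonneg: "\<And>x. w x \<ge> 0" and bal: "balanced r w"
  obtains c where "\<And>x. w x = c * mu x"
proof -
  have mu_pos: "mu x > 0" for x using invariant_prob_pos[OF nonneg irr inv] .
  define c where "c = Min (range (\<lambda>x. w x / mu x))"
  have "c \<in> range (\<lambda>x. w x / mu x)" unfolding c_def by (rule Min_in) auto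
  then obtain x0 where x0: "c = w x0 / mu x0" by blast
  have c_le: "c \<le> w x / mu x" for x unfolding c_def by (rule Min_le) auto
  have diff_nonneg: "w x - c * mu x \<ge> 0" for x
    using c_le[of x] mu_pos[of x] by (simp add: pos_le_divide_eq)
  have "balanced r mu" using inv unfolding invariant_prob_def balanced_def by auto
  then have "balanced r (\<lambda>x. w x - c * mu x)" using bal by (rule balanced_diff[rotated])
  moreover have "w x0 - c * mu x0 = 0" using x0 mu_pos[of x0] by simp
  ultimately have "w x - c * mu x = 0" for x
    using balanced_zero_propagates[of r "\<lambda>x. w x - c * mu x" x0 x] nonneg diff_nonneg irr by blast
  then have "w x = c * mu x" for x by simp
  then show thesis by (rule that)
qed

lemma invariant_prob_flow_le:
  assumes nonneg: "\<And>x y. x \<noteq> y \<Longrightarrow> r x y \<ge> 0" and inv: "invariant_prob r mu" and "y \<noteq> z"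
  shows "mu y * r y z \<le> mu z * (\<Sum>x\<in>UNIV. \<Sum>y\<in>UNIV - {x}. r x y)"
proof -
  have mu_nonneg: "\<And>x. mu x \<ge> 0"
    and flow: "(\<Sum>u\<in>UNIV - {z}. mu u * r u z) = mu z * (\<Sum>u\<in>UNIV - {z}. r z u)"
    using inv unfolding invariant_prob_def by auto
  have "mu y * r y z \<le> (\<Sum>u\<in>UNIV - {z}. mu u * r u z)"
    using \<open>y \<noteq> z\<close> mu_nonneg nonneg by (intro member_le_sum) auto
  also have "\<dots> = mu z * (\<Sum>u\<in>UNIV - {z}. r z u)" by (rule flow)
  also have "\<dots> \<le> mu z * (\<Sum>x\<in>UNIV. \<Sum>y\<in>UNIV - {x}. r x y)"
  proof (rule mult_left_mono[OF _ mu_nonneg])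
    have "(\<Sum>y\<in>UNIV - {x}. r x y) \<ge> 0" for x using nonneg by (intro sum_nonneg) auto
    then show "(\<Sum>u\<in>UNIV - {z}. r z u) \<le> (\<Sum>x\<in>UNIV. \<Sum>y\<in>UNIV - {x}. r x y)"
      by (intro member_le_sum[where f = "\<lambda>x. \<Sum>y\<in>UNIV - {x}. r x y"]) simp_all
  qed
  finally show ?thesis .
qed

section \<open>Ordered families\<close>

lemma tendsto_of_arctan_tendsto:
  fixes x :: "nat \<Rightarrow> real"
  assumes "(\<lambda>N. arctan (x N)) \<longlonglongrightarrow> \<theta>" "\<bar>\<theta>\<bar> < pi / 2"
  shows "x \<longlonglongrightarrow> tan \<theta>"
proof -
  have "cos \<theta> > 0" using assms(2) by (intro cos_gt_zero_pi) auto
  then have "(\<lambda>N. tan (arctan (x N))) \<longlonglongrightarrow> tan \<theta>"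
    using isCont_tendsto_compose[OF isCont_tan assms(1)] by simp
  then show ?thesis by (simp add: tan_arctan)
qed

lemma ordered_family_eventually_pos:
  "ordered_family I a \<Longrightarrow> i \<in> I \<Longrightarrow> eventually (\<lambda>N. a i N > 0) sequentially"
  using eventually_ge_at_top[of 1] by (rule eventually_mono) (auto simp: ordered_family_def)

lemma ordered_family_ratio_self:
  assumes "ordered_family I a" "i \<in> I"
  shows "(\<lambda>N. a i N / a i N) \<longlonglongrightarrow> 1"
proof (rule Lim_transform_eventually[OF tendsto_const])
  show "eventually (\<lambda>N. 1 = a i N / a i N) sequentially"
    using ordered_family_eventually_pos[OF assms] by eventually_elim simp
qed

text \<open>Since arctan (a/b) + arctan (b/a) = pi/2 for positive a, b, at most one of the two
  arctan limits is pi/2, and the other ratio then converges.\<close>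
lemma ordered_family_ratio_convergent_either:
  assumes ord: "ordered_family I a" and ij: "i \<in> I" "j \<in> I"
  shows "convergent (\<lambda>N. a i N / a j N) \<or> convergent (\<lambda>N. a j N / a i N)"
proof (cases "i = j")
  case True
  then show ?thesis using ordered_family_ratio_self[OF ord ij(1)] by (auto simp: convergent_def)
next
  case False
  obtain t1 where t1: "(\<lambda>N. arctan (a i N / a j N)) \<longlonglongrightarrow> t1"
    using ord ij False unfolding ordered_family_def convergent_def by blast
  obtain t2 where t2: "(\<lambda>N. arctan (a j N / a i N)) \<longlonglongrightarrow> t2"
    using ord ij False unfolding ordered_family_def convergent_def by metis
  have pos: "eventually (\<lambda>N. a i N > 0 \<and> a j N > 0) sequentially"
    using ordered_family_eventually_pos[OF ord ij(1)] ordered_family_eventually_pos[OF ord ij(2)]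
    by eventually_elim simp
  have "eventually (\<lambda>N. arctan (a i N / a j N) \<ge> 0) sequentially"
    using pos by eventually_elim (simp add: arctan_less_zero_iff)
  then have "t1 \<ge> 0" by (rule tendsto_lowerbound[OF t1]) simp
  have "eventually (\<lambda>N. arctan (a j N / a i N) \<ge> 0) sequentially"
    using pos by eventually_elim (simp add: arctan_less_zero_iff)
  then have "t2 \<ge> 0" by (rule tendsto_lowerbound[OF t2]) simp
  have "eventually (\<lambda>N. pi / 2 - arctan (a i N / a j N) = arctan (a j N / a i N)) sequentially"
    using pos
  proof eventually_elim
    case (elim N)
    then have "a i N / a j N > 0" by simp
    then show ?case using arctan_inverse[of "a i N / a j N"] by simp
  qed
  then have "(\<lambda>N. arctan (a j N / a i N)) \<longlonglongrightarrow> pi / 2 - t1"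
    by (rule Lim_transform_eventually[OF tendsto_diff[OF tendsto_const t1]])
  then have "t2 = pi / 2 - t1" using t2 LIMSEQ_unique by blast
  then have "\<bar>t1\<bar> < pi / 2 \<or> \<bar>t2\<bar> < pi / 2" using \<open>t1 \<ge> 0\<close> \<open>t2 \<ge> 0\<close> pi_gt_zero by linarith
  then show ?thesis
    using tendsto_of_arctan_tendsto[OF t1] tendsto_of_arctan_tendsto[OF t2]
    by (auto simp: convergent_def)
qed

lemma ordered_family_ratio_convergent_trans:
  assumes ord: "ordered_family I a" and j: "j \<in> I"
    and "convergent (\<lambda>N. a i N / a j N)" "convergent (\<lambda>N. a j N / a k N)"
  shows "convergent (\<lambda>N. a i N / a k N)"
proof -
  obtain L1 L2 where "(\<lambda>N. a i N / a j N) \<longlonglongrightarrow> L1" "(\<lambda>N. a j N / a k N) \<longlonglongrightarrow> L2"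
    using assms(3,4) unfolding convergent_def by blast
  then have "(\<lambda>N. a i N / a j N * (a j N / a k N)) \<longlonglongrightarrow> L1 * L2" by (rule tendsto_mult)
  moreover have "eventually (\<lambda>N. a i N / a j N * (a j N / a k N) = a i N / a k N) sequentially"
    using ordered_family_eventually_pos[OF ord j] by eventually_elim simp
  ultimately have "(\<lambda>N. a i N / a k N) \<longlonglongrightarrow> L1 * L2" by (rule Lim_transform_eventually)
  then show ?thesis unfolding convergent_def ..
qed

lemma ordered_family_dominant:
  assumes ord: "ordered_family I a" and S: "finite S" "S \<noteq> {}" "S \<subseteq> I"
  obtains k where "k \<in> S" "\<And>j. j \<in> S \<Longrightarrow> convergent (\<lambda>N. a j N / a k N)"
proof -
  have "\<exists>k\<in>S. \<forall>j\<in>S. convergent (\<lambda>N. a j N / a k N)"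
    using S
  proof (induction S rule: finite_ne_induct)
    case (singleton x)
    then show ?case using ordered_family_ratio_self[OF ord] by (auto simp: convergent_def)
  next
    case (insert x F)
    then obtain k where k: "k \<in> F" "\<forall>j\<in>F. convergent (\<lambda>N. a j N / a k N)" by auto
    have x: "x \<in> I" and "k \<in> I" using insert k by auto
    show ?case
    proof (cases "convergent (\<lambda>N. a x N / a k N)")
      case True
      then show ?thesis using k by auto
    next
      case False
      then have "convergent (\<lambda>N. a k N / a x N)"
        using ordered_family_ratio_convergent_either[OF ord x \<open>k \<in> I\<close>] by blast
      then have "\<forall>j\<in>F. convergent (\<lambda>N. a j N / a x N)"
        using k ordered_family_ratio_convergent_trans[OF ord \<open>k \<in> I\<close>] by blast
      moreover have "convergent (\<lambda>N. a x N / a x N)"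
        using ordered_family_ratio_self[OF ord x] by (auto simp: convergent_def)
      ultimately show ?thesis by blast
    qed
  qed
  then show thesis using that by blast
qed

lemma ordered_family_dominant_limits:
  assumes ord: "ordered_family I a" and S: "finite S" "S \<noteq> {}" "S \<subseteq> I"
  obtains k L where "k \<in> S" "L k = 1" "eventually (\<lambda>N. a k N > 0) sequentially"
    "\<And>j. j \<in> S \<Longrightarrow> L j \<ge> 0" "\<And>j. j \<in> S \<Longrightarrow> (\<lambda>N. a j N / a k N) \<longlonglongrightarrow> L j"
proof -
  obtain k where k: "k \<in> S" and conv: "\<And>j. j \<in> S \<Longrightarrow> convergent (\<lambda>N. a j N / a k N)"
    using ordered_family_dominant[OF ord S] by blast
  define L where "L j = lim (\<lambda>N. a j N / a k N)" for j
  have L: "(\<lambda>N. a j N / a k N) \<longlonglongrightarrow> L j" if "j \<in> S" for j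
    using conv[OF that] unfolding L_def by (simp add: convergent_LIMSEQ_iff)
  have k_pos: "eventually (\<lambda>N. a k N > 0) sequentially"
    using k S by (intro ordered_family_eventually_pos[OF ord]) auto
  have L_nonneg: "L j \<ge> 0" if "j \<in> S" for j
  proof (rule tendsto_lowerbound[OF L[OF that]])
    have "eventually (\<lambda>N. a j N > 0) sequentially"
      using that S by (intro ordered_family_eventually_pos[OF ord]) auto
    then show "eventually (\<lambda>N. a j N / a k N \<ge> 0) sequentially"
      using k_pos by eventually_elim simp
  qed simp
  have "L k = 1" using L[OF k] ordered_family_ratio_self[OF ord, of k] k S LIMSEQ_unique by blast
  then show thesis using that k k_pos L_nonneg L by blast
qed

text \<open>Normalised by a dominant member of the family, both sums converge; the dominant member
  contributes 1 to one of the two limits, and the bound keeps the limit of the denominator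
  positive.\<close>
lemma ordered_family_sum_ratio_convergent:
  fixes \<phi> :: "'b \<Rightarrow> 'i" and \<psi> :: "'c \<Rightarrow> 'i"
  assumes ord: "ordered_family I a" and fin: "finite A" "finite B"
    and sub: "\<phi> ` A \<subseteq> I" "\<psi> ` B \<subseteq> I" and ne: "A \<noteq> {} \<or> B \<noteq> {}"
    and c: "c > 0" and bound: "eventually (\<lambda>N. c * (\<Sum>u\<in>A. a (\<phi> u) N) \<le> (\<Sum>v\<in>B. a (\<psi> v) N)) sequentially"
  shows "convergent (\<lambda>N. (\<Sum>u\<in>A. a (\<phi> u) N) / (\<Sum>v\<in>B. a (\<psi> v) N))"
proof -
  define S where "S = \<phi> ` A \<union> \<psi> ` B"
  have "finite S" "S \<noteq> {}" "S \<subseteq> I" using fin ne sub unfolding S_def by auto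
  then obtain k L where k: "k \<in> S" "L k = 1" and k_pos: "eventually (\<lambda>N. a k N > 0) sequentially"
    and L_nonneg: "\<And>j. j \<in> S \<Longrightarrow> L j \<ge> 0" and L: "\<And>j. j \<in> S \<Longrightarrow> (\<lambda>N. a j N / a k N) \<longlonglongrightarrow> L j"
    by (rule ordered_family_dominant_limits[OF ord]) blast+
  define p where "p = (\<Sum>u\<in>A. L (\<phi> u))"
  define q where "q = (\<Sum>v\<in>B. L (\<psi> v))"
  have P: "(\<lambda>N. (\<Sum>u\<in>A. a (\<phi> u) N) / a k N) \<longlonglongrightarrow> p"
    unfolding p_def sum_divide_distrib by (intro tendsto_sum L) (auto simp: S_def)
  have Q: "(\<lambda>N. (\<Sum>v\<in>B. a (\<psi> v) N) / a k N) \<longlonglongrightarrow> q"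
    unfolding q_def sum_divide_distrib by (intro tendsto_sum L) (auto simp: S_def)
  have "c * p \<le> q"
  proof (rule tendsto_le[OF _ Q tendsto_mult[OF tendsto_const P]])
    show "eventually (\<lambda>N. c * ((\<Sum>u\<in>A. a (\<phi> u) N) / a k N) \<le> (\<Sum>v\<in>B. a (\<psi> v) N) / a k N) sequentially"
      using bound k_pos by eventually_elim (simp add: divide_right_mono)
  qed simp
  moreover have "p \<ge> 0" unfolding p_def by (intro sum_nonneg L_nonneg) (auto simp: S_def)
  moreover have "1 \<le> p \<or> 1 \<le> q"
  proof (cases "k \<in> \<phi> ` A")
    case True
    then obtain u where "u \<in> A" "\<phi> u = k" by blast
    then have "L k \<le> p"
      unfolding p_def using fin(1) by (force intro: member_le_sum L_nonneg simp: S_def)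
    then show ?thesis using k by simp
  next
    case False
    then obtain v where "v \<in> B" "\<psi> v = k" using k unfolding S_def by blast
    then have "L k \<le> q"
      unfolding q_def using fin(2) by (force intro: member_le_sum L_nonneg simp: S_def)
    then show ?thesis using k by simp
  qed
  ultimately have "q > 0" using c by (smt (verit) mult_le_cancel_left1)
  then have "(\<lambda>N. ((\<Sum>u\<in>A. a (\<phi> u) N) / a k N) / ((\<Sum>v\<in>B. a (\<psi> v) N) / a k N)) \<longlonglongrightarrow> p / q"
    by (intro tendsto_divide[OF P Q]) simp
  moreover have "eventually (\<lambda>N. ((\<Sum>u\<in>A. a (\<phi> u) N) / a k N) / ((\<Sum>v\<in>B. a (\<psi> v) N) / a k N)
      = (\<Sum>u\<in>A. a (\<phi> u) N) / (\<Sum>v\<in>B. a (\<psi> v) N)) sequentially"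
    using k_pos by eventually_elim simp
  ultimately have "(\<lambda>N. (\<Sum>u\<in>A. a (\<phi> u) N) / (\<Sum>v\<in>B. a (\<psi> v) N)) \<longlonglongrightarrow> p / q"
    by (rule Lim_transform_eventually)
  then show ?thesis unfolding convergent_def ..
qed

section \<open>Chains satisfying Assumption A\<close>

definition tree_edges :: "'a \<Rightarrow> ('a \<Rightarrow> 'a) \<Rightarrow> ('a \<times> 'a) set" where
  "tree_edges x f = (\<lambda>a. (a, f a)) ` (UNIV - {x})"

lemma card_tree_edges:
  fixes x :: "'a::finite"
  shows "card (tree_edges x f) = CARD('a) - 1"
  unfolding tree_edges_def by (simp add: card_image inj_on_def card_Diff_singleton)

lemma prod_tree_edges:
  "(\<Prod>p\<in>tree_edges x f. r (fst p) (snd p)) = (\<Prod>a\<in>UNIV - {x}. r a (f a))"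
  unfolding tree_edges_def by (simp add: prod.reindex inj_on_def)

locale ordered_rates_chain =
  fixes R :: "nat \<Rightarrow> 'a::finite \<Rightarrow> 'a \<Rightarrow> real" and mu :: "nat \<Rightarrow> 'a \<Rightarrow> real"
  assumes nonneg: "\<And>N x y. N \<ge> 1 \<Longrightarrow> x \<noteq> y \<Longrightarrow> R N x y \<ge> 0"
    and irred: "\<And>N. N \<ge> 1 \<Longrightarrow> irreducible_rates (R N)"
    and inv: "\<And>N. N \<ge> 1 \<Longrightarrow> invariant_prob (R N) (mu N)"
    and A: "assumption_A R"
begin

lemma rate_zero_or_pos: "x \<noteq> y \<Longrightarrow> (\<forall>N\<ge>1. R N x y = 0) \<or> (\<forall>N\<ge>1. R N x y > 0)"
  using A unfolding assumption_A_def by blast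

lemma bond_rate_pos: "N \<ge> 1 \<Longrightarrow> (x, y) \<in> bonds R \<Longrightarrow> R N x y > 0"
  using rate_zero_or_pos[of x y] unfolding bonds_def by auto

lemma nonbond_rate_zero: "N \<ge> 1 \<Longrightarrow> x \<noteq> y \<Longrightarrow> (x, y) \<notin> bonds R \<Longrightarrow> R N x y = 0"
  using rate_zero_or_pos[of x y] unfolding bonds_def by auto

lemma stationary_pos: "N \<ge> 1 \<Longrightarrow> mu N x > 0"
  using invariant_prob_pos[OF nonneg irred inv] .

definition rate_exponents :: "nat \<Rightarrow> ('a \<times> 'a \<Rightarrow> nat) set" where
  "rate_exponents m = {k. (\<forall>p. p \<notin> bonds R \<longrightarrow> k p = 0) \<and> (\<Sum>p\<in>bonds R. k p) = m}"

definition rate_monomial :: "('a \<times> 'a \<Rightarrow> nat) \<Rightarrow> nat \<Rightarrow> real" where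
  "rate_monomial k N = (\<Prod>p\<in>bonds R. R N (fst p) (snd p) ^ k p)"

lemma ordered_family_rate_monomials: "m \<ge> 1 \<Longrightarrow> ordered_family (rate_exponents m) rate_monomial"
  using A unfolding assumption_A_def rate_exponents_def rate_monomial_def by blast

lemma rate_monomial_pos: "N \<ge> 1 \<Longrightarrow> rate_monomial k N > 0"
  unfolding rate_monomial_def using bond_rate_pos by (auto intro!: prod_pos)

lemma indicator_in_rate_exponents:
  assumes "E \<subseteq> bonds R"
  shows "indicator E \<in> rate_exponents (card E)"
proof -
  have "(\<Sum>p\<in>bonds R. indicator E p) = card E"
    using assms by (simp add: sum_indicator_eq_card Int_absorb1)
  then show ?thesis using assms unfolding rate_exponents_def by (auto simp: indicator_eq_0_iff)
qed

lemma rate_monomial_indicator: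
  assumes "E \<subseteq> bonds R"
  shows "rate_monomial (indicator E) N = (\<Prod>p\<in>E. R N (fst p) (snd p))"
proof -
  have "rate_monomial (indicator E) N = (\<Prod>p\<in>bonds R. if p \<in> E then R N (fst p) (snd p) else 1)"
    unfolding rate_monomial_def by (rule prod.cong) (auto simp: indicator_def)
  also have "\<dots> = (\<Prod>p\<in>E. R N (fst p) (snd p))"
    using assms by (simp add: prod.If_cases Int_absorb1 Collect_mem_eq)
  finally show ?thesis .
qed

lemma total_rate_eq_sum_bonds:
  assumes "N \<ge> 1"
  shows "(\<Sum>x\<in>UNIV. \<Sum>y\<in>UNIV - {x}. R N x y) = (\<Sum>b\<in>bonds R. rate_monomial (indicator {b}) N)"
proof -
  have "(\<Sum>x\<in>UNIV. \<Sum>y\<in>UNIV - {x}. R N x y) = (\<Sum>(x, y)\<in>(SIGMA x:UNIV. UNIV - {x}). R N x y)"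
    by (rule sum.Sigma) auto
  also have "\<dots> = (\<Sum>(x, y)\<in>bonds R. R N x y)"
  proof (rule sum.mono_neutral_right)
    show "bonds R \<subseteq> (SIGMA x:UNIV. UNIV - {x})" unfolding bonds_def by auto
    show "\<forall>p\<in>(SIGMA x:UNIV. UNIV - {x}) - bonds R. (case p of (x, y) \<Rightarrow> R N x y) = 0"
      using assms by (auto intro!: nonbond_rate_zero)
  qed simp
  finally show ?thesis by (simp add: rate_monomial_indicator case_prod_unfold)
qed

lemma scaled_rate_convergent:
  assumes "y \<noteq> z"
  shows "convergent (\<lambda>N. alpha R N * R N y z)"
proof (cases "(y, z) \<in> bonds R")
  case True
  let ?e = "\<lambda>b. indicator {b} :: 'a \<times> 'a \<Rightarrow> nat"
  have "convergent (\<lambda>N. (\<Sum>b\<in>{(y, z)}. rate_monomial (?e b) N) / (\<Sum>b\<in>bonds R. rate_monomial (?e b) N))"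
  proof (rule ordered_family_sum_ratio_convergent[OF ordered_family_rate_monomials[of 1], where c = 1])
    show "?e ` {(y, z)} \<subseteq> rate_exponents 1" "?e ` bonds R \<subseteq> rate_exponents 1"
      using True indicator_in_rate_exponents[of "{_}"] by auto
    show "eventually (\<lambda>N. 1 * (\<Sum>b\<in>{(y, z)}. rate_monomial (?e b) N) \<le> (\<Sum>b\<in>bonds R. rate_monomial (?e b) N)) sequentially"
      using eventually_ge_at_top[of 1]
    proof eventually_elim
      case (elim N)
      show ?case
        using member_le_sum[of "(y, z)" "bonds R" "\<lambda>b. rate_monomial (?e b) N"] True rate_monomial_pos[OF elim]
        by (simp add: less_imp_le)
    qed
  qed simp_all
  moreover have "eventually (\<lambda>N. alpha R N * R N y z
      = (\<Sum>b\<in>{(y, z)}. rate_monomial (?e b) N) / (\<Sum>b\<in>bonds R. rate_monomial (?e b) N)) sequentially"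
    using eventually_ge_at_top[of 1]
    by eventually_elim (use True in \<open>simp add: alpha_def total_rate_eq_sum_bonds rate_monomial_indicator\<close>)
  ultimately show ?thesis by (simp only: convergent_cong)
next
  case False
  have "eventually (\<lambda>N. alpha R N * R N y z = 0) sequentially"
    using eventually_ge_at_top[of 1] by eventually_elim (simp add: nonbond_rate_zero assms False)
  then show ?thesis by (simp only: convergent_cong convergent_const)
qed

lemma scaled_rate_tendsto_limit_rates:
  "y \<noteq> z \<Longrightarrow> (\<lambda>N. alpha R N * R N y z) \<longlonglongrightarrow> limit_rates R y z"
  unfolding limit_rates_def using scaled_rate_convergent by (simp add: convergent_LIMSEQ_iff)

lemma stationary_lower_bound_edge:
  assumes "(y, z) \<in> rate_graph (limit_rates R)"
  obtains c where "c > 0" "eventually (\<lambda>N. c * mu N y \<le> mu N z) sequentially"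
proof -
  define r where "r = limit_rates R y z"
  have "y \<noteq> z" "r > 0" using assms unfolding rate_graph_def r_def by auto
  then have "eventually (\<lambda>N. alpha R N * R N y z > r / 2) sequentially"
    using scaled_rate_tendsto_limit_rates unfolding r_def by (intro order_tendstoD(1)) auto
  then have "eventually (\<lambda>N. r / 2 * mu N y \<le> mu N z) sequentially"
    using eventually_ge_at_top[of 1]
  proof eventually_elim
    case (elim N)
    define T where "T = (\<Sum>x\<in>UNIV. \<Sum>y\<in>UNIV - {x}. R N x y)"
    have "alpha R N = 1 / T" unfolding alpha_def T_def ..
    have "R N y z \<ge> 0" using nonneg[OF elim(2) \<open>y \<noteq> z\<close>] .
    have "alpha R N * R N y z > 0" using elim(1) \<open>r > 0\<close> by linarith
    with \<open>R N y z \<ge> 0\<close> have "alpha R N > 0" by (simp add: zero_less_mult_iff)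
    with \<open>alpha R N = 1 / T\<close> have "T > 0" by simp
    have "r / 2 * mu N y \<le> alpha R N * R N y z * mu N y"
      using elim(1) stationary_pos[OF elim(2), of y] by (intro mult_right_mono) auto
    also have "\<dots> = mu N y * R N y z / T" using \<open>alpha R N = 1 / T\<close> by simp
    also have "\<dots> \<le> mu N z"
      using invariant_prob_flow_le[OF nonneg[OF elim(2)] inv[OF elim(2)] \<open>y \<noteq> z\<close>] \<open>T > 0\<close>
      unfolding T_def by (simp add: pos_divide_le_eq)
    finally show ?case .
  qed
  then show thesis using \<open>r > 0\<close> that[of "r / 2"] by simp
qed

lemma stationary_lower_bound:
  assumes "(y, z) \<in> (rate_graph (limit_rates R))\<^sup>*"
  obtains c where "c > 0" "eventually (\<lambda>N. c * mu N y \<le> mu N z) sequentially"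
proof -
  from assms have "\<exists>c>0. eventually (\<lambda>N. c * mu N y \<le> mu N z) sequentially"
  proof (induction rule: rtrancl_induct)
    case base
    show ?case by (intro exI[of _ 1]) simp
  next
    case (step z w)
    obtain c1 where "c1 > 0" and c1: "eventually (\<lambda>N. c1 * mu N y \<le> mu N z) sequentially"
      using step.IH by blast
    obtain c2 where "c2 > 0" and c2: "eventually (\<lambda>N. c2 * mu N z \<le> mu N w) sequentially"
      using stationary_lower_bound_edge[OF step.hyps(2)] by blast
    have "eventually (\<lambda>N. (c2 * c1) * mu N y \<le> mu N w) sequentially"
      using c1 c2
    proof eventually_elim
      case (elim N)
      have "(c2 * c1) * mu N y \<le> c2 * mu N z"
        using elim(1) \<open>c2 > 0\<close> by (simp add: mult.assoc)
      also have "\<dots> \<le> mu N w" using elim(2) .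
      finally show ?case .
    qed
    then show ?case using \<open>c1 > 0\<close> \<open>c2 > 0\<close> by (intro exI[of _ "c2 * c1"]) simp
  qed
  then show thesis using that by blast
qed

definition bond_trees :: "'a \<Rightarrow> ('a \<Rightarrow> 'a) set" where
  "bond_trees x = {f \<in> spanning_trees x. tree_edges x f \<subseteq> bonds R}"

lemma tree_edges_rate_exponents:
  assumes "f \<in> bond_trees x"
  shows "indicator (tree_edges x f) \<in> rate_exponents (CARD('a) - 1)"
  using indicator_in_rate_exponents[of "tree_edges x f"] assms
  unfolding bond_trees_def card_tree_edges by simp

lemma tree_weight_eq_sum_rate_monomials:
  assumes "N \<ge> 1"
  shows "tree_weight (R N) x = (\<Sum>f\<in>bond_trees x. rate_monomial (indicator (tree_edges x f)) N)"
proof -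
  have "tree_weight (R N) x = (\<Sum>f\<in>bond_trees x. \<Prod>a\<in>UNIV - {x}. R N a (f a))"
    unfolding tree_weight_def
  proof (rule sum.mono_neutral_right)
    show "\<forall>f\<in>spanning_trees x - bond_trees x. (\<Prod>a\<in>UNIV - {x}. R N a (f a)) = 0"
    proof
      fix f assume "f \<in> spanning_trees x - bond_trees x"
      then have f: "f \<in> spanning_trees x" and "\<not> tree_edges x f \<subseteq> bonds R"
        unfolding bond_trees_def by auto
      then obtain a where "a \<noteq> x" and "(a, f a) \<notin> bonds R"
        unfolding tree_edges_def by blast
      moreover have "f a \<noteq> a" using spanning_tree_no_fixpoint[OF f \<open>a \<noteq> x\<close>] .
      ultimately have "R N a (f a) = 0" using nonbond_rate_zero[OF assms] by simp
      then show "(\<Prod>a\<in>UNIV - {x}. R N a (f a)) = 0"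
        using \<open>a \<noteq> x\<close> by (simp add: prod_zero_iff) blast
    qed
  qed (simp_all add: bond_trees_def)
  also have "\<dots> = (\<Sum>f\<in>bond_trees x. rate_monomial (indicator (tree_edges x f)) N)"
    by (rule sum.cong) (simp_all add: rate_monomial_indicator prod_tree_edges bond_trees_def)
  finally show ?thesis .
qed

lemma bond_trees_nonempty: "bond_trees x \<noteq> {}"
proof -
  have reach: "(a, x) \<in> (bonds R)\<^sup>*" for a
    using irred[of 1] unfolding irreducible_rates_def rate_graph_def bonds_def by simp
  obtain f where "f \<in> spanning_trees x" "\<forall>a. a \<noteq> x \<longrightarrow> (a, f a) \<in> bonds R"
    using spanning_tree_exists[OF reach] by blast
  then have "f \<in> bond_trees x" unfolding bond_trees_def tree_edges_def by auto
  then show ?thesis by blast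
qed

lemma tree_weight_pos:
  assumes "N \<ge> 1"
  shows "tree_weight (R N) x > 0"
  unfolding tree_weight_eq_sum_rate_monomials[OF assms]
  using bond_trees_nonempty[of x] by (intro sum_pos rate_monomial_pos assms) simp_all

lemma tree_weight_proportional_stationary:
  assumes "N \<ge> 1"
  shows "\<exists>d>0. \<forall>x. tree_weight (R N) x = d * mu N x"
proof -
  have "\<And>x. tree_weight (R N) x \<ge> 0" using tree_weight_pos[OF assms] less_imp_le by blast
  with balanced_proportional_invariant_prob[OF nonneg[OF assms] irred[OF assms] inv[OF assms]]
  obtain d where d: "\<And>x. tree_weight (R N) x = d * mu N x"
    using balanced_tree_weight by blast
  moreover have "d > 0"
    using d[of x] tree_weight_pos[OF assms, of x] stationary_pos[OF assms, of x]
    by (simp add: zero_less_mult_iff)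
  ultimately show ?thesis by blast
qed

lemma tree_weight_ratio_convergent:
  assumes "\<eta> \<noteq> \<xi>" and "c > 0"
    and bound: "eventually (\<lambda>N. c * tree_weight (R N) \<eta> \<le> tree_weight (R N) \<xi>) sequentially"
  shows "convergent (\<lambda>N. tree_weight (R N) \<eta> / tree_weight (R N) \<xi>)"
proof -
  let ?m = "\<lambda>x f. indicator (tree_edges x f) :: 'a \<times> 'a \<Rightarrow> nat"
  let ?S = "\<lambda>x N. \<Sum>f\<in>bond_trees x. rate_monomial (?m x f) N"
  have S: "eventually (\<lambda>N. tree_weight (R N) x = ?S x N) sequentially" for x
    using eventually_ge_at_top[of 1] by eventually_elim (rule tree_weight_eq_sum_rate_monomials)
  have "CARD('a) \<ge> 2"
    using card_mono[of UNIV "{\<eta>, \<xi>}"] assms(1) by simp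
  then have ord: "ordered_family (rate_exponents (CARD('a) - 1)) rate_monomial"
    by (intro ordered_family_rate_monomials) simp
  have conv: "convergent (\<lambda>N. ?S \<eta> N / ?S \<xi> N)"
  proof (rule ordered_family_sum_ratio_convergent[OF ord, where c = c])
    show "?m \<eta> ` bond_trees \<eta> \<subseteq> rate_exponents (CARD('a) - 1)"
      and "?m \<xi> ` bond_trees \<xi> \<subseteq> rate_exponents (CARD('a) - 1)"
      using tree_edges_rate_exponents by blast+
    show "eventually (\<lambda>N. c * ?S \<eta> N \<le> ?S \<xi> N) sequentially"
      using bound S[of \<eta>] S[of \<xi>] by eventually_elim simp
  qed (simp_all add: bond_trees_nonempty \<open>c > 0\<close>)
  have "eventually (\<lambda>N. tree_weight (R N) \<eta> / tree_weight (R N) \<xi> = ?S \<eta> N / ?S \<xi> N) sequentially"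
    using S[of \<eta>] S[of \<xi>] by eventually_elim simp
  then show ?thesis using conv by (simp only: convergent_cong)
qed

lemma stationary_ratio_convergent:
  assumes "\<eta> \<noteq> \<xi>" and "(\<eta>, \<xi>) \<in> (rate_graph (limit_rates R))\<^sup>*"
  shows "convergent (\<lambda>N. mu N \<eta> / mu N \<xi>)"
proof -
  obtain c where "c > 0" and c: "eventually (\<lambda>N. c * mu N \<eta> \<le> mu N \<xi>) sequentially"
    using stationary_lower_bound[OF assms(2)] by blast
  have proportional: "eventually (\<lambda>N. \<exists>d>0. \<forall>x. tree_weight (R N) x = d * mu N x) sequentially"
    using eventually_ge_at_top[of 1] by eventually_elim (rule tree_weight_proportional_stationary)
  then have "eventually (\<lambda>N. c * tree_weight (R N) \<eta> \<le> tree_weight (R N) \<xi>) sequentially"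
    using c by eventually_elim (auto simp: mult.left_commute)
  then have conv: "convergent (\<lambda>N. tree_weight (R N) \<eta> / tree_weight (R N) \<xi>)"
    by (rule tree_weight_ratio_convergent[OF assms(1) \<open>c > 0\<close>])
  have "eventually (\<lambda>N. tree_weight (R N) \<eta> / tree_weight (R N) \<xi> = mu N \<eta> / mu N \<xi>) sequentially"
    using proportional by eventually_elim auto
  then show ?thesis using conv by (simp only: convergent_cong)
qed

end

theorem mainTheorem13:
  fixes R :: "nat \<Rightarrow> 'a::finite \<Rightarrow> 'a \<Rightarrow> real"
    and mu :: "nat \<Rightarrow> 'a \<Rightarrow> real"
    and C :: "'a set"
  assumes nonneg: "\<And>N x y. N \<ge> 1 \<Longrightarrow> x \<noteq> y \<Longrightarrow> R N x y \<ge> 0"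
    and irred: "\<And>N. N \<ge> 1 \<Longrightarrow> irreducible_rates (R N)"
    and inv: "\<And>N. N \<ge> 1 \<Longrightarrow> invariant_prob (R N) (mu N)"
    and A: "assumption_A R"
    and cls: "communicating_class (limit_rates R) C"
    and "\<eta> \<in> C" and "\<xi> \<in> C" and "\<eta> \<noteq> \<xi>"
  shows "\<exists>m. 0 < m \<and> (\<lambda>N. mu N \<eta> / mu N \<xi>) \<longlonglongrightarrow> m"
proof -
  interpret ordered_rates_chain R mu
    using nonneg irred inv A by unfold_locales
  have \<eta>\<xi>: "(\<eta>, \<xi>) \<in> (rate_graph (limit_rates R))\<^sup>*" and \<xi>\<eta>: "(\<xi>, \<eta>) \<in> (rate_graph (limit_rates R))\<^sup>*"
    using cls \<open>\<eta> \<in> C\<close> \<open>\<xi> \<in> C\<close> unfolding communicating_class_def communicate_def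
    by (auto intro: rtrancl_trans)
  obtain m where m: "(\<lambda>N. mu N \<eta> / mu N \<xi>) \<longlonglongrightarrow> m"
    using stationary_ratio_convergent[OF \<open>\<eta> \<noteq> \<xi>\<close> \<eta>\<xi>] unfolding convergent_def ..
  obtain c where "c > 0" and c: "eventually (\<lambda>N. c * mu N \<xi> \<le> mu N \<eta>) sequentially"
    using stationary_lower_bound[OF \<xi>\<eta>] .
  have "eventually (\<lambda>N. c \<le> mu N \<eta> / mu N \<xi>) sequentially"
    using c eventually_ge_at_top[of 1] by eventually_elim (simp add: pos_le_divide_eq stationary_pos)
  then have "c \<le> m" by (rule tendsto_lowerbound[OF m]) simp
  then show ?thesis using m \<open>c > 0\<close> by (intro exI[of _ m]) simp
qed

end
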